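(* Let $K\ge2$ and let $\mathscr{M}_K\subseteq\mathscr{S}_K$ be closed with at least two elements. Then $$4\,\kappa(\{\{1,\dots,K\}\},\mathscr{M}_K)\ge\mathrm{diam}^2(\mathscr{M}_K):=\max\{\|\nu-\gamma\|^2:\nu,\gamma\in\mathscr{M}_K\}.$$
   Context: $\mathscr{S}_K=\{\delta\in[0,1]^K:\sum_i\delta_i=1\}$; $\|\cdot\|$ Euclidean norm; $e_j(K)$ the $j$-th standard basis vector of $\mathbb{R}^K$. For a partition $\mathcal{H}=\{\mathcal{H}_1,\dots,\mathcal{H}_l\}$ of $\{1,\dots,K\}$, let $B_i$ be the $K\times|\mathcal{H}_i|$ matrix with columns $e_j(K)$, $j\in\mathcal{H}_i$, and define $$\kappa(\mathcal{H},\mathscr{M}_K)=\sup\Big\{\Big[\max_{\delta\in\mathscr{M}_K}v'\delta-\sup_{\delta\in\mathscr{T}}v'\delta\Big]\wedge\min_{i=1,\dots,l}\Big[\max_{\delta\in\mathscr{M}_K}(v+B_iw_i)'\delta-\sup_{\delta\in\mathscr{M}_K\setminus\mathscr{T}}(v+B_iw_i)'\delta\Big]\Big\},$$ the supremum over all nonempty Borel sets $\mathscr{T}\subsetneq\mathscr{M}_K$, all $v\in[-1,1]^K$ and all $w_i\in[-1,1]^{|\mathcal{H}_i|}$, $i=1,\dots,l$. *)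

theory Defs
  imports "HOL-Analysis.Analysis"
begin

text \<open>Coordinates are indexed by a finite type 'n with CARD('n) = K.\<close>

definition prob_simplex :: "(real^'n::finite) set" where
  "prob_simplex = {\<delta>. (\<forall>i. 0 \<le> \<delta>$i \<and> \<delta>$i \<le> 1) \<and> (\<Sum>i\<in>UNIV. \<delta>$i) = 1}"

text \<open>B_i w_i: embed the block vector w_i (given as a function on the block Hi)
  into R^K, zero outside the block.\<close>
definition blockvec :: "'n set \<Rightarrow> ('n \<Rightarrow> real) \<Rightarrow> real^'n::finite" where
  "blockvec Hi w = (\<chi> j. if j \<in> Hi then w j else 0)"

definition is_partition :: "('n::finite) set set \<Rightarrow> bool" where
  "is_partition H \<longleftrightarrow> (\<forall>Hi\<in>H. Hi \<noteq> {}) \<and> \<Union>H = UNIV \<and>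
     (\<forall>A\<in>H. \<forall>B\<in>H. A \<noteq> B \<longrightarrow> A \<inter> B = {})"

definition kappa :: "('n::finite) set set \<Rightarrow> (real^'n) set \<Rightarrow> real" where
  "kappa H M = Sup {min
       (Sup ((\<lambda>\<delta>. v \<bullet> \<delta>) ` M) - Sup ((\<lambda>\<delta>. v \<bullet> \<delta>) ` T))
       (Min ((\<lambda>Hi. Sup ((\<lambda>\<delta>. (v + blockvec Hi (W Hi)) \<bullet> \<delta>) ` M)
                    - Sup ((\<lambda>\<delta>. (v + blockvec Hi (W Hi)) \<bullet> \<delta>) ` (M - T))) ` H))
     | T v W. T \<noteq> {} \<and> T \<subset> M \<and> T \<in> sets borel \<and> (\<forall>j. \<bar>v$j\<bar> \<le> 1) \<and>
              (\<forall>Hi\<in>H. \<forall>j\<in>Hi. \<bar>W Hi j\<bar> \<le> 1)}"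

definition diam2 :: "(real^'n::finite) set \<Rightarrow> real" where
  "diam2 M = Sup {(norm (\<nu> - \<gamma>))\<^sup>2 | \<nu> \<gamma>. \<nu> \<in> M \<and> \<gamma> \<in> M}"

end

theory Submission
  imports Defs
begin

text \<open>For \<nu> \<noteq> \<gamma> in M choose v = (\<nu> - \<gamma>)/2 and the block vector w = -(\<nu> - \<gamma>), so
  that v + w = -v, and cut M by the hyperplane orthogonal to \<nu> - \<gamma> through the midpoint of
  \<nu> and \<gamma>; let T be the part of M on the side of \<gamma>, a Borel set because M is closed.
  On T the functional v stays below its value at the midpoint, which \<nu> exceeds by
  |\<nu> - \<gamma>|^2/4; symmetrically -v stays below its midpoint value on M - T, which \<gamma> exceeds
  by the same amount. Hence both gaps in the definition of kappa are at least |\<nu> - \<gamma>|^2/4.\<close>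

lemma Sup_image_gap_ge:
  fixes f :: "'a \<Rightarrow> real"
  assumes "bdd_above (f ` M)" "x \<in> M" "S \<noteq> {}" "\<forall>y\<in>S. f y \<le> c"
  shows "f x - c \<le> Sup (f ` M) - Sup (f ` S)"
proof -
  have "f x \<le> Sup (f ` M)" using assms(1,2) by (intro cSup_upper imageI)
  moreover have "Sup (f ` S) \<le> c" using assms(3,4) by (intro cSup_least) auto
  ultimately show ?thesis by linarith
qed

lemma abs_component_diff_prob_simplex_le_1:
  assumes "\<nu> \<in> prob_simplex" "\<gamma> \<in> prob_simplex"
  shows "\<bar>(\<nu> - \<gamma>)$j\<bar> \<le> 1"
proof -
  have "0 \<le> \<nu>$j" "\<nu>$j \<le> 1" "0 \<le> \<gamma>$j" "\<gamma>$j \<le> 1"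
    using assms unfolding prob_simplex_def by auto
  then show ?thesis by (simp add: abs_le_iff)
qed

lemma abs_inner_prob_simplex_le_1:
  fixes u d :: "real^'n::finite"
  assumes "d \<in> prob_simplex" "\<forall>j. \<bar>u$j\<bar> \<le> 1"
  shows "\<bar>u \<bullet> d\<bar> \<le> 1"
proof -
  have d: "\<forall>i. 0 \<le> d$i \<and> d$i \<le> 1" "(\<Sum>i\<in>UNIV. d$i) = 1"
    using assms(1) unfolding prob_simplex_def by auto
  have "\<bar>u \<bullet> d\<bar> = \<bar>\<Sum>i\<in>UNIV. u$i * d$i\<bar>" by (simp add: inner_vec_def)
  also have "\<dots> \<le> (\<Sum>i\<in>UNIV. \<bar>u$i * d$i\<bar>)" by (rule sum_abs)
  also have "\<dots> \<le> (\<Sum>i\<in>UNIV. d$i)"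
  proof (rule sum_mono)
    fix i
    show "\<bar>u$i * d$i\<bar> \<le> d$i"
      using d(1) assms(2) mult_right_mono[of "\<bar>u$i\<bar>" 1 "d$i"] by (simp add: abs_mult)
  qed
  finally show ?thesis using d(2) by simp
qed

lemma bdd_above_inner_prob_simplex:
  fixes u :: "real^'n::finite"
  assumes "S \<subseteq> prob_simplex" "\<forall>j. \<bar>u$j\<bar> \<le> 1"
  shows "bdd_above ((\<lambda>\<delta>. u \<bullet> \<delta>) ` S)"
  using abs_inner_prob_simplex_le_1[OF _ assms(2)] assms(1)
  by (intro bdd_aboveI[where M=1]) (auto simp: abs_le_iff)

lemma Sup_inner_diff_le_2:
  fixes v :: "real^'n::finite"
  assumes "M \<subseteq> prob_simplex" "T \<noteq> {}" "T \<subseteq> M" "\<forall>j. \<bar>v$j\<bar> \<le> 1"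
  shows "Sup ((\<lambda>\<delta>. v \<bullet> \<delta>) ` M) - Sup ((\<lambda>\<delta>. v \<bullet> \<delta>) ` T) \<le> 2"
proof -
  obtain t where t: "t \<in> T" using assms(2) by auto
  have "Sup ((\<lambda>\<delta>. v \<bullet> \<delta>) ` M) \<le> 1"
    using assms abs_inner_prob_simplex_le_1[OF _ assms(4)]
    by (intro cSup_least) (auto simp: abs_le_iff)
  moreover have "v \<bullet> t \<le> Sup ((\<lambda>\<delta>. v \<bullet> \<delta>) ` T)"
    using t assms by (intro cSup_upper bdd_above_inner_prob_simplex) auto
  moreover have "-1 \<le> v \<bullet> t"
    using t assms abs_inner_prob_simplex_le_1[OF _ assms(4), of t] by (auto simp: abs_le_iff)
  ultimately show ?thesis by linarith
qed

lemma kappa_ge_witness: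
  fixes M :: "(real^'n::finite) set"
  assumes "M \<subseteq> prob_simplex" "T \<noteq> {}" "T \<subset> M" "T \<in> sets borel"
    and "\<forall>j. \<bar>v$j\<bar> \<le> 1" "\<forall>Hi\<in>H. \<forall>j\<in>Hi. \<bar>W Hi j\<bar> \<le> 1"
  shows "min
       (Sup ((\<lambda>\<delta>. v \<bullet> \<delta>) ` M) - Sup ((\<lambda>\<delta>. v \<bullet> \<delta>) ` T))
       (Min ((\<lambda>Hi. Sup ((\<lambda>\<delta>. (v + blockvec Hi (W Hi)) \<bullet> \<delta>) ` M)
                    - Sup ((\<lambda>\<delta>. (v + blockvec Hi (W Hi)) \<bullet> \<delta>) ` (M - T))) ` H))
     \<le> kappa H M"
  unfolding kappa_def
proof (rule cSup_upper)
  show "bdd_above {min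
       (Sup ((\<lambda>\<delta>. v \<bullet> \<delta>) ` M) - Sup ((\<lambda>\<delta>. v \<bullet> \<delta>) ` T))
       (Min ((\<lambda>Hi. Sup ((\<lambda>\<delta>. (v + blockvec Hi (W Hi)) \<bullet> \<delta>) ` M)
                    - Sup ((\<lambda>\<delta>. (v + blockvec Hi (W Hi)) \<bullet> \<delta>) ` (M - T))) ` H))
     | T v W. T \<noteq> {} \<and> T \<subset> M \<and> T \<in> sets borel \<and> (\<forall>j. \<bar>v$j\<bar> \<le> 1) \<and>
              (\<forall>Hi\<in>H. \<forall>j\<in>Hi. \<bar>W Hi j\<bar> \<le> 1)}"
    by (intro bdd_aboveI[where M=2], elim CollectE exE conjE, hypsubst,
        rule min.coboundedI1, rule Sup_inner_diff_le_2[OF assms(1)]) auto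
qed (use assms in blast)

lemma sq_dist_le_4_kappa_UNIV:
  fixes M :: "(real^'n::finite) set"
  assumes "closed M" "M \<subseteq> prob_simplex" "\<nu> \<in> M" "\<gamma> \<in> M" "\<nu> \<noteq> \<gamma>"
  shows "(norm (\<nu> - \<gamma>))\<^sup>2 \<le> 4 * kappa {UNIV} M"
proof -
  define v where "v = (1/2) *\<^sub>R (\<nu> - \<gamma>)"
  define W where "W = (\<lambda>(_::'n set) j. - ((\<nu> - \<gamma>)$j))"
  define m where "m = (v \<bullet> \<nu> + v \<bullet> \<gamma>) / 2"
  define T where "T = M \<inter> {\<delta>. v \<bullet> \<delta> \<le> m}"
  define D where "D = (norm (\<nu> - \<gamma>))\<^sup>2"
  have "D > 0" using assms(5) by (simp add: D_def)
  have "v \<bullet> \<nu> - v \<bullet> \<gamma> = D / 2"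
    by (simp add: v_def D_def inner_diff_right[symmetric] power2_norm_eq_inner)
  then have gaps: "v \<bullet> \<nu> - m = D / 4" "(-v) \<bullet> \<gamma> - (-m) = D / 4" and "v \<bullet> \<gamma> \<le> m" "\<not> v \<bullet> \<nu> \<le> m"
    using \<open>D > 0\<close> by (auto simp: m_def field_simps)
  have T: "T \<noteq> {}" "T \<subset> M" "M - T \<noteq> {}"
    using assms(3,4) \<open>v \<bullet> \<gamma> \<le> m\<close> \<open>\<not> v \<bullet> \<nu> \<le> m\<close> by (auto simp: T_def)
  have "T \<in> sets borel"
    unfolding T_def using assms(1) by (intro borel_closed closed_Int closed_halfspace_le)
  have comp: "\<bar>(\<nu> - \<gamma>)$j\<bar> \<le> 1" for j
    using assms(2-4) by (intro abs_component_diff_prob_simplex_le_1) auto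
  then have v: "\<forall>j. \<bar>v$j\<bar> \<le> 1"
    by (simp add: v_def abs_mult) (meson comp order_trans one_le_numeral)
  then have minus_v: "\<forall>j. \<bar>(-v)$j\<bar> \<le> 1" by simp
  have W: "\<forall>Hi\<in>{UNIV}. \<forall>j\<in>Hi. \<bar>W Hi j\<bar> \<le> 1"
    using comp by (simp add: W_def abs_minus_commute)
  have bv: "v + blockvec UNIV (W UNIV) = - v"
    by (simp add: blockvec_def W_def v_def vec_eq_iff field_simps)
  then have kappa_ge: "min (Sup ((\<lambda>\<delta>. v \<bullet> \<delta>) ` M) - Sup ((\<lambda>\<delta>. v \<bullet> \<delta>) ` T))
                 (Sup ((\<lambda>\<delta>. (-v) \<bullet> \<delta>) ` M) - Sup ((\<lambda>\<delta>. (-v) \<bullet> \<delta>) ` (M - T)))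
             \<le> kappa {UNIV} M"
    using kappa_ge_witness[OF assms(2) T(1,2) \<open>T \<in> sets borel\<close> v W]
    by (simp only: bv image_insert image_empty Min_singleton)
  have below: "\<forall>y\<in>T. v \<bullet> y \<le> m" and above: "\<forall>y\<in>M - T. (-v) \<bullet> y \<le> -m"
    by (auto simp: T_def)
  have gap_T: "v \<bullet> \<nu> - m \<le> Sup ((\<lambda>\<delta>. v \<bullet> \<delta>) ` M) - Sup ((\<lambda>\<delta>. v \<bullet> \<delta>) ` T)"
    by (rule Sup_image_gap_ge[OF bdd_above_inner_prob_simplex[OF assms(2) v] assms(3) T(1) below])
  have gap_M_minus_T: "(-v) \<bullet> \<gamma> - (-m)
      \<le> Sup ((\<lambda>\<delta>. (-v) \<bullet> \<delta>) ` M) - Sup ((\<lambda>\<delta>. (-v) \<bullet> \<delta>) ` (M - T))"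
    by (rule Sup_image_gap_ge[OF bdd_above_inner_prob_simplex[OF assms(2) minus_v] assms(4) T(3) above])
  have "D / 4 \<le> kappa {UNIV} M"
    using min.boundedI[OF gap_T[unfolded gaps(1)] gap_M_minus_T[unfolded gaps(2)]] kappa_ge
    by (rule order_trans)
  then show ?thesis unfolding D_def by simp
qed

theorem lemmaB1:
  fixes M :: "(real^'n::finite) set"
  assumes "CARD('n) \<ge> 2"
    and "closed M" and "M \<subseteq> prob_simplex"
    and "\<exists>\<nu>\<in>M. \<exists>\<gamma>\<in>M. \<nu> \<noteq> \<gamma>"
  shows "4 * kappa {UNIV} M \<ge> diam2 M"
proof -
  obtain a b where ab: "a \<in> M" "b \<in> M" "a \<noteq> b" using assms(4) by auto
  have "0 \<le> 4 * kappa {UNIV} M"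
    using sq_dist_le_4_kappa_UNIV[OF assms(2,3) ab] by (meson order_trans zero_le_power2)
  then have "(norm (\<nu> - \<gamma>))\<^sup>2 \<le> 4 * kappa {UNIV} M" if "\<nu> \<in> M" "\<gamma> \<in> M" for \<nu> \<gamma>
    using sq_dist_le_4_kappa_UNIV[OF assms(2,3) that] by (cases "\<nu> = \<gamma>") auto
  then show ?thesis
    unfolding diam2_def using ab by (intro cSup_least) auto
qed

end
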